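(* Let $m\ge 2$, $\boldsymbol{\mu}\in\mathbb{R}^m$, let $\boldsymbol{\Lambda}\in\mathbb{R}^{m\times m}$ be invertible, $\boldsymbol{\Sigma}=\boldsymbol{\Lambda}\boldsymbol{\Lambda}^T$, and let $\boldsymbol{\Sigma}^{-1/2}$ denote the symmetric positive definite inverse square root of $\boldsymbol{\Sigma}$. Let $\mathcal{R}$ be a scalar random variable with $\mathcal{R}>0$ almost surely, and let $\boldsymbol{\mathcal{V}}\sim vMF(\boldsymbol{\mu}_v,\tau)$ be independent of $\mathcal{R}$. Let $\boldsymbol{\mathcal{X}}=\boldsymbol{\mu}+\mathcal{R}\boldsymbol{\Lambda}\boldsymbol{\mathcal{V}}$ and $T=(\boldsymbol{\mathcal{X}}-\boldsymbol{\mu})^T\boldsymbol{\Sigma}^{-1}(\boldsymbol{\mathcal{X}}-\boldsymbol{\mu})$. Then $T$ is independent of the whitened random vector $\boldsymbol{\Sigma}^{-1/2}(\boldsymbol{\mathcal{X}}-\boldsymbol{\mu})/\sqrt{T}$.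
   Context: The von Mises–Fisher distribution $vMF(\boldsymbol{\mu}_v,\tau)$ on the unit sphere $\mathbb{S}^{m-1}=\{\mathbf{x}\in\mathbb{R}^m:\mathbf{x}^T\mathbf{x}=1\}$, with mean direction $\boldsymbol{\mu}_v\in\mathbb{S}^{m-1}$ and concentration $\tau>0$, has density with respect to the surface measure on $\mathbb{S}^{m-1}$ proportional to $\exp(\tau\boldsymbol{\mu}_v^T\mathbf{v})$. *)

theory Defs
  imports "HOL-Probability.Probability"
begin

text \<open>Surface (Hausdorff) measure on the unit sphere S^{m-1}, realised as the cone measure:
  sigma(A) = m * lebesgue({t x | x in A, 0 < t <= 1}), i.e. m times the push-forward of
  Lebesgue measure on the unit ball under the radial projection x -> x / |x|.\<close>
definition sphere_surface :: "'a::euclidean_space measure" where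
  "sphere_surface =
     density (distr (density lborel (indicator (ball 0 1))) borel sgn)
             (\<lambda>_. ennreal (real DIM('a)))"

definition vMF_density :: "'a::euclidean_space \<Rightarrow> real \<Rightarrow> 'a \<Rightarrow> real" where
  "vMF_density mu tau v =
     exp (tau * (mu \<bullet> v)) / (\<integral>w. exp (tau * (mu \<bullet> w)) \<partial>sphere_surface)"

definition vMF_distributed :: "'b measure \<Rightarrow> ('b \<Rightarrow> 'a::euclidean_space) \<Rightarrow> 'a \<Rightarrow> real \<Rightarrow> bool" where
  "vMF_distributed M V mu tau \<longleftrightarrow>
     distributed M sphere_surface V (\<lambda>v. ennreal (vMF_density mu tau v))"

text \<open>Independence of two random variables with (possibly different) Borel codomains:
  the standard definition P(X in A, Y in B) = P(X in A) P(Y in B) for all Borel A, B.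
  (The library's indep_var forces both variables to have the same codomain type.)\<close>
definition indep_rv :: "'w measure \<Rightarrow> ('w \<Rightarrow> 'a::topological_space) \<Rightarrow> ('w \<Rightarrow> 'b::topological_space) \<Rightarrow> bool" where
  "indep_rv M X Y \<longleftrightarrow>
     X \<in> borel_measurable M \<and> Y \<in> borel_measurable M \<and>
     (\<forall>A \<in> sets borel. \<forall>B \<in> sets borel.
        measure M (X -` A \<inter> Y -` B \<inter> space M) =
        measure M (X -` A \<inter> space M) * measure M (Y -` B \<inter> space M))"

end

theory Submission
  imports Defs
begin

text \<open>Almost surely V lies on the unit sphere and R > 0, so almost surely
  T = R^2 and the whitened vector equals Sigma_inv_sqrt (Lambda V). Thus T and the whitened
  vector agree almost surely with Borel functions of R and of V respectively, and inherit the
  independence of R and V.\<close>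

lemma indep_rv_compose:
  assumes "indep_rv M X Y"
    and f: "f \<in> borel_measurable borel" and g: "g \<in> borel_measurable borel"
  shows "indep_rv M (\<lambda>\<omega>. f (X \<omega>)) (\<lambda>\<omega>. g (Y \<omega>))"
proof -
  have "measure M ((\<lambda>\<omega>. f (X \<omega>)) -` A \<inter> (\<lambda>\<omega>. g (Y \<omega>)) -` B \<inter> space M) =
        measure M ((\<lambda>\<omega>. f (X \<omega>)) -` A \<inter> space M) * measure M ((\<lambda>\<omega>. g (Y \<omega>)) -` B \<inter> space M)"
    if "A \<in> sets borel" "B \<in> sets borel" for A B
  proof -
    have "f -` A \<in> sets borel" "g -` B \<in> sets borel"
      using measurable_sets_borel[OF f that(1)] measurable_sets_borel[OF g that(2)] by auto
    then show ?thesis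
      using assms(1) unfolding indep_rv_def vimage_comp[symmetric, unfolded comp_def] by blast
  qed
  with assms show ?thesis
    unfolding indep_rv_def by (auto intro: measurable_compose)
qed

lemma indep_rv_AE_cong:
  assumes indep: "indep_rv M X Y"
    and X': "X' \<in> borel_measurable M" and Y': "Y' \<in> borel_measurable M"
    and AE_X: "AE \<omega> in M. X \<omega> = X' \<omega>" and AE_Y: "AE \<omega> in M. Y \<omega> = Y' \<omega>"
  shows "indep_rv M X' Y'"
proof -
  have X: "X \<in> borel_measurable M" and Y: "Y \<in> borel_measurable M"
    using indep unfolding indep_rv_def by auto
  have "measure M (X' -` A \<inter> Y' -` B \<inter> space M) =
        measure M (X' -` A \<inter> space M) * measure M (Y' -` B \<inter> space M)"
    if A: "A \<in> sets borel" and B: "B \<in> sets borel" for A B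
  proof -
    have sets: "X -` A \<inter> space M \<in> sets M" "Y -` B \<inter> space M \<in> sets M"
      "X' -` A \<inter> space M \<in> sets M" "Y' -` B \<inter> space M \<in> sets M"
      using X Y X' Y' A B by (auto intro: measurable_sets)
    then have joint: "X -` A \<inter> Y -` B \<inter> space M \<in> sets M" "X' -` A \<inter> Y' -` B \<inter> space M \<in> sets M"
      using sets.Int[OF sets(1,2)] sets.Int[OF sets(3,4)] by (simp_all add: Int_ac)
    have "measure M (X' -` A \<inter> Y' -` B \<inter> space M) = measure M (X -` A \<inter> Y -` B \<inter> space M)"
      by (rule measure_eq_AE) (use AE_X AE_Y joint in \<open>auto elim: AE_mp\<close>)
    moreover have "measure M (X' -` A \<inter> space M) = measure M (X -` A \<inter> space M)"
      by (rule measure_eq_AE) (use AE_X sets in \<open>auto elim: AE_mp\<close>)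
    moreover have "measure M (Y' -` B \<inter> space M) = measure M (Y -` B \<inter> space M)"
      by (rule measure_eq_AE) (use AE_Y sets in \<open>auto elim: AE_mp\<close>)
    ultimately show ?thesis
      using indep A B unfolding indep_rv_def by simp
  qed
  with X' Y' show ?thesis unfolding indep_rv_def by blast
qed

lemma borel_measurable_matrix_vector_mult [measurable]:
  fixes A :: "real ^ 'n ^ 'm"
  shows "(\<lambda>x. A *v x) \<in> borel_measurable borel"
  by (intro borel_measurable_continuous_onI linear_continuous_on matrix_vector_mul_bounded_linear)

lemma matrix_mul_matrix_inv:
  fixes A :: "'a::semiring_1 ^ 'n ^ 'n"
  assumes "invertible A"
  shows "A ** matrix_inv A = mat 1"
  using assms unfolding invertible_def matrix_inv_def by (rule someI_ex[THEN conjunct1])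

lemma inner_matrix_inv_gram:
  fixes L :: "real ^ 'n ^ 'n" and v :: "real ^ 'n"
  assumes L: "invertible L"
  shows "(L *v v) \<bullet> (matrix_inv (L ** transpose L) *v (L *v v)) = v \<bullet> v"
proof -
  define z where "z = matrix_inv (L ** transpose L) *v (L *v v)"
  have "invertible (L ** transpose L)"
    using L by (simp add: invertible_mult transpose_invertible)
  then have "L *v (transpose L *v z) = L *v v"
    unfolding z_def
    by (metis matrix_mul_matrix_inv matrix_vector_mul_assoc matrix_vector_mul_lid)
  then have z: "transpose L *v z = v"
    using inj_matrix_vector_mult[OF L] by (auto dest: injD)
  have "(L *v v) \<bullet> z = v \<bullet> (transpose L *v z)"
    by (metis dot_lmul_matrix inner_commute transpose_matrix_vector)
  with z show ?thesis
    unfolding z_def by simp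
qed

lemma AE_sphere_surface_norm:
  "AE v in (sphere_surface :: 'a::euclidean_space measure). norm v = 1"
proof -
  let ?B = "density lborel (indicator (ball (0::'a) 1))"
  have "AE x in lborel. (x::'a) \<noteq> 0"
    by (rule AE_lborel_singleton)
  then have "AE x in ?B. norm (sgn x) = 1"
    by (subst AE_density) (auto simp: norm_sgn intro: borel_measurable_indicator elim: AE_mp)
  then have "AE v in distr ?B borel sgn. norm v = 1"
    by (subst AE_distr_iff) auto
  then show ?thesis
    unfolding sphere_surface_def by (subst AE_density) auto
qed

lemma vMF_distributed_AE_norm:
  fixes V :: "'b \<Rightarrow> 'a::euclidean_space"
  assumes "vMF_distributed M V mu tau"
  shows "AE \<omega> in M. norm (V \<omega>) = 1"
proof -
  have V: "distributed M sphere_surface V (\<lambda>v. ennreal (vMF_density mu tau v))"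
    using assms unfolding vMF_distributed_def .
  have sets_sphere: "sets (sphere_surface :: 'a measure) = sets borel"
    unfolding sphere_surface_def by simp
  have "AE v in density sphere_surface (\<lambda>v. ennreal (vMF_density mu tau v)). norm v = 1"
    using AE_sphere_surface_norm distributed_borel_measurable[OF V]
    by (subst AE_density) auto
  then have "AE v in distr M sphere_surface V. norm v = 1"
    unfolding distributed_distr_eq_density[OF V] .
  moreover have "{v \<in> space sphere_surface. norm (v::'a) = 1} \<in> sets sphere_surface"
    unfolding sets_sphere sets_eq_imp_space_eq[OF sets_sphere] by measurable
  ultimately show ?thesis
    by (subst (asm) AE_distr_iff[OF distributed_measurable[OF V]]) auto
qed

theorem proposition2:
  fixes M :: "'w measure"
    and R :: "'w \<Rightarrow> real"
    and V :: "'w \<Rightarrow> real ^ 'm"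
    and mu mu_v :: "real ^ 'm"
    and tau :: real
    and Lambda Sigma_inv_sqrt :: "real ^ 'm ^ 'm"
  assumes m2: "CARD('m) \<ge> 2"
    and P: "prob_space M"
    and inv: "invertible Lambda"
    and S_sym: "transpose Sigma_inv_sqrt = Sigma_inv_sqrt"
    and S_pd: "\<forall>x. x \<noteq> 0 \<longrightarrow> x \<bullet> (Sigma_inv_sqrt *v x) > 0"
    and S_sq: "Sigma_inv_sqrt ** Sigma_inv_sqrt = matrix_inv (Lambda ** transpose Lambda)"
    and R_meas: "R \<in> borel_measurable M"
    and R_pos: "AE \<omega> in M. R \<omega> > 0"
    and mu_v: "norm mu_v = 1"
    and tau: "tau > 0"
    and V_vMF: "vMF_distributed M V mu_v tau"
    and indep: "indep_rv M R V"
  shows "let X = (\<lambda>\<omega>. mu + R \<omega> *\<^sub>R (Lambda *v V \<omega>));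
             T = (\<lambda>\<omega>. (X \<omega> - mu) \<bullet> (matrix_inv (Lambda ** transpose Lambda) *v (X \<omega> - mu)))
         in indep_rv M T
              (\<lambda>\<omega>. (1 / sqrt (T \<omega>)) *\<^sub>R (Sigma_inv_sqrt *v (X \<omega> - mu)))"
proof -
  define T where "T \<omega> = (R \<omega> *\<^sub>R (Lambda *v V \<omega>)) \<bullet>
    (matrix_inv (Lambda ** transpose Lambda) *v (R \<omega> *\<^sub>R (Lambda *v V \<omega>)))" for \<omega>
  define W where "W \<omega> = (1 / sqrt (T \<omega>)) *\<^sub>R (Sigma_inv_sqrt *v (R \<omega> *\<^sub>R (Lambda *v V \<omega>)))" for \<omega>
  have V_meas: "V \<in> borel_measurable M"
    using indep unfolding indep_rv_def by blast
  have "T \<omega> = (R \<omega>)\<^sup>2 \<and> W \<omega> = Sigma_inv_sqrt *v (Lambda *v V \<omega>)"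
    if "R \<omega> > 0" "norm (V \<omega>) = 1" for \<omega>
    using that inner_matrix_inv_gram[OF inv, of "V \<omega>"]
    by (simp add: T_def W_def matrix_vector_mult_scaleR power2_eq_square dot_square_norm)
  then have "AE \<omega> in M. T \<omega> = (R \<omega>)\<^sup>2 \<and> W \<omega> = Sigma_inv_sqrt *v (Lambda *v V \<omega>)"
    using R_pos vMF_distributed_AE_norm[OF V_vMF] by (auto elim: AE_mp)
  moreover have "indep_rv M (\<lambda>\<omega>. (R \<omega>)\<^sup>2) (\<lambda>\<omega>. Sigma_inv_sqrt *v (Lambda *v V \<omega>))"
    using indep by (rule indep_rv_compose) measurable
  moreover have "T \<in> borel_measurable M" "W \<in> borel_measurable M"
    unfolding T_def W_def using R_meas V_meas by measurable
  ultimately have "indep_rv M T W"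
    by (auto intro: indep_rv_AE_cong elim: AE_mp)
  then show ?thesis
    unfolding T_def W_def Let_def by simp
qed

end
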